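(* Let $n\ge 2$ and $x\in\mathbb{C}$. Then, as formal power series in $z$, $$M_{xJ_n+B_n}(z)=\frac{nxz\,\frac{d}{dz}\big(z\tilde M_{B_n}(z)\big)}{1-nxz\,\tilde M_{B_n}(z)}+M_{B_n}(z).$$
   Context: $J_n$ is the $n\times n$ all-ones matrix, and $B_n=i\,M$ where $M$ is the $n\times n$ matrix with zero diagonal, entries $1$ above and $-1$ below the diagonal. For an $n\times n$ matrix $C$, $M_C(z)=\operatorname{Tr}((I-zC)^{-1})=\sum_{m\ge0}\operatorname{Tr}(C^m)z^m$. Define the state $\omega(C)=\frac1n\sum_{i,j=1}^n c_{ij}$ for $C=[c_{ij}]$, and $\tilde M_{B_n}(z)=\omega((I-zB_n)^{-1})=\sum_{m\ge0}\omega(B_n^m)z^m$. *)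

theory Defs
  imports "Jordan_Normal_Form.Matrix" "HOL-Computational_Algebra.Formal_Power_Series"
begin

definition J_mat :: "nat \<Rightarrow> complex mat" where
  "J_mat n = mat n n (\<lambda>_. 1)"

definition B_mat :: "nat \<Rightarrow> complex mat" where
  "B_mat n = mat n n (\<lambda>(i,j). if i < j then \<i> else if j < i then - \<i> else 0)"

definition mat_trace :: "complex mat \<Rightarrow> complex" where
  "mat_trace C = (\<Sum>i<dim_row C. C $$ (i,i))"

definition omega :: "complex mat \<Rightarrow> complex" where
  "omega C = (1 / of_nat (dim_row C)) * (\<Sum>i<dim_row C. \<Sum>j<dim_col C. C $$ (i,j))"

definition M_fps :: "complex mat \<Rightarrow> complex fps" where
  "M_fps C = Abs_fps (\<lambda>m. mat_trace (C ^\<^sub>m m))"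

definition Mt_fps :: "complex mat \<Rightarrow> complex fps" where
  "Mt_fps C = Abs_fps (\<lambda>m. omega (C ^\<^sub>m m))"

end

theory Submission
  imports Defs
begin

(* Write A = B + x J with J = 1 1^T of rank one, and let u_k and s_k be the entry sums 1^T B^k 1 and
   1^T A^k 1. Expanding A^m = B^m + (sum over i < m of B^(m-1-i) (x J) A^i) and using
   1^T C J D 1 = (1^T C 1)(1^T D 1) and tr (C J D) = 1^T D C 1, everything is expressed through the
   u_k and s_k. Their generating functions satisfy S = U + x z S U, so 1 + x z S = 1 / (1 - x z U);
   and M_A - M_B = x z W, where W, the generating function of 1^T (I - zB)^-1 (I - zA)^-1 1,
   equals (z U)' (1 + x z S). Since U = n Mt_B, this is the formula. *)

lemma pow_mat_add:
  fixes A :: "'a :: semiring_1 mat"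
  assumes A: "A \<in> carrier_mat n n"
  shows "A ^\<^sub>m (j + k) = A ^\<^sub>m j * A ^\<^sub>m k"
proof (induction k)
  case 0
  show ?case using A by simp
next
  case (Suc k)
  have "A ^\<^sub>m (j + Suc k) = (A ^\<^sub>m j * A ^\<^sub>m k) * A"
    using Suc.IH by simp
  also have "\<dots> = A ^\<^sub>m j * (A ^\<^sub>m k * A)"
    using assoc_mult_mat[OF pow_carrier_mat[OF A] pow_carrier_mat[OF A] A] .
  finally show ?case
    by simp
qed

lemma pow_mat_Suc_left:
  fixes A :: "'a :: semiring_1 mat"
  assumes "A \<in> carrier_mat n n"
  shows "A ^\<^sub>m Suc k = A * A ^\<^sub>m k"
  using pow_mat_add[OF assms, of 1 k] assms by simp

lemma additive_pow_mat_perturbation: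
  fixes \<phi> :: "'a :: semiring_1 mat \<Rightarrow> 'b :: comm_monoid_add"
  assumes B: "B \<in> carrier_mat n n" and E: "E \<in> carrier_mat n n" and A: "A = B + E"
    and additive: "\<And>P Q. P \<in> carrier_mat n n \<Longrightarrow> Q \<in> carrier_mat n n \<Longrightarrow>
      \<phi> (P + Q) = \<phi> P + \<phi> Q"
  shows "\<phi> (A ^\<^sub>m m) = \<phi> (B ^\<^sub>m m) + (\<Sum>i<m. \<phi> (B ^\<^sub>m (m - Suc i) * E * A ^\<^sub>m i))"
  using additive
proof (induction m arbitrary: \<phi>)
  case 0
  show ?case using A B E by simp
next
  case (Suc m)
  have A_carrier: "A \<in> carrier_mat n n"
    using A B E by simp
  have "A ^\<^sub>m Suc m = (B + E) * A ^\<^sub>m m"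
    using pow_mat_Suc_left[OF A_carrier] A by simp
  also have "\<dots> = B * A ^\<^sub>m m + E * A ^\<^sub>m m"
    using add_mult_distrib_mat[OF B E pow_carrier_mat[OF A_carrier]] .
  finally have "\<phi> (A ^\<^sub>m Suc m) = \<phi> (B * A ^\<^sub>m m) + \<phi> (E * A ^\<^sub>m m)"
    using A_carrier B E Suc.prems by simp
  also have "\<phi> (B * A ^\<^sub>m m) =
      \<phi> (B * B ^\<^sub>m m) + (\<Sum>i<m. \<phi> (B * (B ^\<^sub>m (m - Suc i) * E * A ^\<^sub>m i)))"
    by (rule Suc.IH) (use B Suc.prems in \<open>simp add: mult_add_distrib_mat[of _ n n]\<close>)
  also have "(\<Sum>i<m. \<phi> (B * (B ^\<^sub>m (m - Suc i) * E * A ^\<^sub>m i))) =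
      (\<Sum>i<m. \<phi> (B ^\<^sub>m (Suc m - Suc i) * E * A ^\<^sub>m i))"
  proof (intro sum.cong refl)
    fix i assume "i \<in> {..<m}"
    then have "Suc m - Suc i = Suc (m - Suc i)" by simp
    then show "\<phi> (B * (B ^\<^sub>m (m - Suc i) * E * A ^\<^sub>m i)) =
        \<phi> (B ^\<^sub>m (Suc m - Suc i) * E * A ^\<^sub>m i)"
      using A_carrier B E
      by (simp add: pow_mat_Suc_left[OF B] assoc_mult_mat[of _ n n _ n _ n]
          mult_carrier_mat[of _ n n _ n] del: pow_mat.simps(2))
  qed
  moreover have "B * B ^\<^sub>m m = B ^\<^sub>m Suc m"
    by (rule pow_mat_Suc_left[OF B, symmetric])
  moreover have "B ^\<^sub>m (Suc m - Suc m) * E * A ^\<^sub>m m = E * A ^\<^sub>m m"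
    using B E by simp
  ultimately show ?case
    by (simp add: add.assoc)
qed

lemma sum_mat_eq_double_sum:
  "sum_mat A = (\<Sum>i<dim_row A. \<Sum>j<dim_col A. A $$ (i, j))"
  by (simp add: sum_mat_def sum.cartesian_product atLeast0LessThan)

lemma sum_mat_smult: "sum_mat (c \<cdot>\<^sub>m A) = (c :: 'a :: comm_semiring_0) * sum_mat A"
  by (auto simp: sum_mat_def sum_distrib_left intro!: sum.cong)

lemma mat_trace_add:
  "A \<in> carrier_mat n n \<Longrightarrow> B \<in> carrier_mat n n \<Longrightarrow>
    mat_trace (A + B) = mat_trace A + mat_trace B"
  by (simp add: mat_trace_def sum.distrib)

lemma mat_trace_smult: "A \<in> carrier_mat n n \<Longrightarrow> mat_trace (c \<cdot>\<^sub>m A) = c * mat_trace A"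
  by (auto simp: mat_trace_def sum_distrib_left intro!: sum.cong)

lemma J_mat_carrier [simp]: "J_mat n \<in> carrier_mat n n"
  by (simp add: J_mat_def)

lemma index_mult_J_mult_mat:
  assumes "C \<in> carrier_mat m n" "D \<in> carrier_mat n p" "i < m" "j < p"
  shows "(C * J_mat n * D) $$ (i, j) = (\<Sum>l<n. C $$ (i, l)) * (\<Sum>k<n. D $$ (k, j))"
proof -
  have "(C * J_mat n * D) $$ (i, j) = (\<Sum>k<n. (\<Sum>l<n. C $$ (i, l)) * D $$ (k, j))"
    using assms by (auto simp: J_mat_def scalar_prod_def atLeast0LessThan intro!: sum.cong)
  then show ?thesis
    by (simp add: sum_distrib_left)
qed

lemma sum_mat_mult_J_mult:
  assumes "C \<in> carrier_mat m n" "D \<in> carrier_mat n p"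
  shows "sum_mat (C * J_mat n * D) = sum_mat C * sum_mat D"
proof -
  have "sum_mat (C * J_mat n * D) = (\<Sum>i<m. \<Sum>j<p. (C * J_mat n * D) $$ (i, j))"
    using assms by (simp add: sum_mat_eq_double_sum)
  also have "\<dots> = (\<Sum>i<m. \<Sum>j<p. (\<Sum>l<n. C $$ (i, l)) * (\<Sum>k<n. D $$ (k, j)))"
    by (intro sum.cong refl index_mult_J_mult_mat[OF assms]) auto
  finally show ?thesis
    using assms by (simp add: sum_mat_eq_double_sum sum_product sum.swap[of _ "{..<p}"])
qed

lemma mat_trace_mult_J_mult:
  assumes "C \<in> carrier_mat m n" "D \<in> carrier_mat n m"
  shows "mat_trace (C * J_mat n * D) = sum_mat (D * C)"
proof -
  have "mat_trace (C * J_mat n * D) = (\<Sum>i<m. (\<Sum>k<n. D $$ (k, i)) * (\<Sum>l<n. C $$ (i, l)))"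
    using assms unfolding mat_trace_def
    by (simp del: index_mult_mat(1), intro sum.cong refl)
      (simp_all add: index_mult_J_mult_mat[OF assms] mult.commute del: index_mult_mat(1))
  also have "\<dots> = (\<Sum>i<m. \<Sum>k<n. \<Sum>l<n. D $$ (k, i) * C $$ (i, l))"
    by (simp add: sum_product)
  also have "\<dots> = (\<Sum>k<n. \<Sum>i<m. \<Sum>l<n. D $$ (k, i) * C $$ (i, l))"
    by (rule sum.swap)
  also have "\<dots> = (\<Sum>k<n. \<Sum>l<n. \<Sum>i<m. D $$ (k, i) * C $$ (i, l))"
    by (rule sum.cong[OF refl], rule sum.swap)
  finally show ?thesis
    using assms by (simp add: sum_mat_eq_double_sum scalar_prod_def atLeast0LessThan)
qed

lemma sum_atMost_sum_lessThan_diff: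
  fixes g :: "nat \<Rightarrow> 'a :: comm_semiring_1"
  shows "(\<Sum>i\<le>p. \<Sum>l<p - i. g l) = (\<Sum>l<p. of_nat (p - l) * g l)"
proof (induction p)
  case 0
  show ?case by simp
next
  case (Suc p)
  have "(\<Sum>i\<le>Suc p. \<Sum>l<Suc p - i. g l) = (\<Sum>l<Suc p. g l) + (\<Sum>l<p. of_nat (p - l) * g l)"
    by (subst sum.atMost_Suc_shift) (simp add: Suc.IH)
  also have "\<dots> = (\<Sum>l<p. of_nat (Suc p - l) * g l) + g p"
    by (simp add: Suc_diff_le algebra_simps sum.distrib)
  finally show ?case
    by simp
qed

lemma fps_nth_const_X_mult_Suc:
  fixes c :: "'a :: comm_semiring_1"
  shows "fps_nth (fps_const c * fps_X * f) (Suc p) = c * fps_nth f p"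
  by (simp add: mult.assoc)

definition sum_mat_pow_fps :: "'a :: comm_semiring_1 mat \<Rightarrow> 'a fps" where
  "sum_mat_pow_fps C = Abs_fps (\<lambda>k. sum_mat (C ^\<^sub>m k))"

lemma Mt_fps_eq_sum_mat_pow_fps:
  assumes "C \<in> carrier_mat n n"
  shows "Mt_fps C = fps_const (1 / of_nat n) * sum_mat_pow_fps C"
  using assms by (intro fps_ext) (simp add: Mt_fps_def omega_def sum_mat_pow_fps_def sum_mat_eq_double_sum)

lemma inverse_one_minus_fps:
  fixes c S U :: "'a :: field fps"
  assumes "S = U + c * S * U"
  shows "inverse (1 - c * U) = 1 + c * S"
proof (rule fps_inverse_unique)
  have "(1 - c * U) * (1 + c * S) = 1 + c * (S - (U + c * S * U))"
    by (simp add: algebra_simps)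
  then show "(1 - c * U) * (1 + c * S) = 1"
    using assms by simp
qed

locale rank_one_update =
  fixes n :: nat and B :: "complex mat" and x :: complex
  assumes B_carrier [simp]: "B \<in> carrier_mat n n"
begin

abbreviation A :: "complex mat" where
  "A \<equiv> x \<cdot>\<^sub>m J_mat n + B"

lemma A_carrier [simp]: "A \<in> carrier_mat n n"
  by simp

lemma A_eq_B_plus: "A = B + x \<cdot>\<^sub>m J_mat n"
  by (rule comm_add_mat[of _ n n]) simp_all

lemma B_eq_A_plus: "B = A + (- x) \<cdot>\<^sub>m J_mat n"
  using carrier_matD[OF B_carrier] by (intro eq_matI) (auto simp: J_mat_def)

lemma sum_mat_pow_mult_pow:
  "sum_mat (B ^\<^sub>m j * A ^\<^sub>m k) =
     sum_mat (B ^\<^sub>m (j + k)) + x * (\<Sum>i<k. sum_mat (B ^\<^sub>m (j + k - Suc i)) * sum_mat (A ^\<^sub>m i))"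
proof -
  have "sum_mat (B ^\<^sub>m j * A ^\<^sub>m k) = sum_mat (B ^\<^sub>m j * B ^\<^sub>m k) +
      (\<Sum>i<k. sum_mat (B ^\<^sub>m j * (B ^\<^sub>m (k - Suc i) * (x \<cdot>\<^sub>m J_mat n) * A ^\<^sub>m i)))"
    by (rule additive_pow_mat_perturbation[OF B_carrier _ A_eq_B_plus])
      (simp_all add: mult_add_distrib_mat[of _ n n] sum_mat_add[of _ n n] mult_carrier_mat[of _ n n _ n])
  also have "\<dots> = sum_mat (B ^\<^sub>m (j + k)) +
      (\<Sum>i<k. x * (sum_mat (B ^\<^sub>m (j + k - Suc i)) * sum_mat (A ^\<^sub>m i)))"
  proof -
    have "B ^\<^sub>m j * (B ^\<^sub>m (k - Suc i) * (x \<cdot>\<^sub>m J_mat n) * A ^\<^sub>m i) =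
        x \<cdot>\<^sub>m (B ^\<^sub>m (j + k - Suc i) * J_mat n * A ^\<^sub>m i)" if "i < k" for i
    proof -
      have "j + k - Suc i = j + (k - Suc i)"
        using that by simp
      then show ?thesis
        by (simp add: pow_mat_add[OF B_carrier] assoc_mult_mat[of _ n n _ n _ n]
            mult_smult_distrib[of _ n n _ n] mult_smult_assoc_mat[of _ n n _ n]
            mult_carrier_mat[of _ n n _ n] del: pow_mat.simps(2))
    qed
    then show ?thesis
      by (simp add: pow_mat_add[OF B_carrier] sum_mat_smult sum_mat_mult_J_mult[of _ n n _ n]
          del: pow_mat.simps(2))
  qed
  finally show ?thesis
    by (simp add: sum_distrib_left)
qed

(* Expanding B = A + (-x) J rather than A = B + x J keeps the powers of B on the left of the mixed
   products, which is the form sum_mat_pow_mult_pow evaluates. *)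
lemma mat_trace_pow:
  "mat_trace (A ^\<^sub>m m) =
     mat_trace (B ^\<^sub>m m) + x * (\<Sum>i<m. sum_mat (B ^\<^sub>m i * A ^\<^sub>m (m - Suc i)))"
proof -
  have "mat_trace (B ^\<^sub>m m) = mat_trace (A ^\<^sub>m m) +
      (\<Sum>i<m. mat_trace (A ^\<^sub>m (m - Suc i) * ((- x) \<cdot>\<^sub>m J_mat n) * B ^\<^sub>m i))"
    by (rule additive_pow_mat_perturbation[OF A_carrier _ B_eq_A_plus]) (simp_all add: mat_trace_add[of _ n])
  also have "(\<Sum>i<m. mat_trace (A ^\<^sub>m (m - Suc i) * ((- x) \<cdot>\<^sub>m J_mat n) * B ^\<^sub>m i)) =
      - x * (\<Sum>i<m. sum_mat (B ^\<^sub>m i * A ^\<^sub>m (m - Suc i)))"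
    by (simp add: mult_smult_distrib[of _ n n _ n] mult_smult_assoc_mat[of _ n n _ n]
        mat_trace_smult[of _ n] mat_trace_mult_J_mult[of _ n n] mult_carrier_mat[of _ n n _ n]
        sum_distrib_left del: pow_mat.simps(2))
  finally show ?thesis
    by simp
qed

lemma sum_mat_pow_fps_perturbed:
  "sum_mat_pow_fps A = sum_mat_pow_fps B + fps_const x * fps_X * sum_mat_pow_fps A * sum_mat_pow_fps B"
proof (rule fps_ext)
  fix m
  show "fps_nth (sum_mat_pow_fps A) m =
      fps_nth (sum_mat_pow_fps B + fps_const x * fps_X * sum_mat_pow_fps A * sum_mat_pow_fps B) m"
  proof (cases m)
    case 0
    then show ?thesis
      by (simp add: sum_mat_pow_fps_def)
  next
    case (Suc p)
    have "sum_mat (A ^\<^sub>m m) =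
        sum_mat (B ^\<^sub>m m) + x * (\<Sum>i\<le>p. sum_mat (A ^\<^sub>m i) * sum_mat (B ^\<^sub>m (p - i)))"
      using sum_mat_pow_mult_pow[of 0 m] Suc by (simp add: lessThan_Suc_atMost mult.commute)
    moreover have "fps_nth (fps_const x * fps_X * sum_mat_pow_fps A * sum_mat_pow_fps B) (Suc p) =
        x * fps_nth (sum_mat_pow_fps A * sum_mat_pow_fps B) p"
      unfolding mult.assoc[of "fps_const x * fps_X"] by (rule fps_nth_const_X_mult_Suc)
    ultimately show ?thesis
      using Suc by (simp add: sum_mat_pow_fps_def fps_mult_nth atLeast0AtMost del: pow_mat.simps(2))
  qed
qed

definition sum_mat_pow_mult_pow_fps :: "complex fps" where
  "sum_mat_pow_mult_pow_fps = Abs_fps (\<lambda>p. \<Sum>i\<le>p. sum_mat (B ^\<^sub>m i * A ^\<^sub>m (p - i)))"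

lemma M_fps_perturbed: "M_fps A = M_fps B + fps_const x * fps_X * sum_mat_pow_mult_pow_fps"
proof (rule fps_ext)
  fix m
  show "fps_nth (M_fps A) m = fps_nth (M_fps B + fps_const x * fps_X * sum_mat_pow_mult_pow_fps) m"
    using mat_trace_pow[of m]
    by (cases m) (simp_all add: M_fps_def sum_mat_pow_mult_pow_fps_def lessThan_Suc_atMost mult.assoc)
qed

lemma sum_mat_pow_mult_pow_fps_eq:
  "sum_mat_pow_mult_pow_fps = fps_deriv (fps_X * sum_mat_pow_fps B) +
     fps_const x * fps_X * sum_mat_pow_fps A * fps_deriv (fps_X * sum_mat_pow_fps B)"
proof (rule fps_ext)
  fix p
  let ?u = "\<lambda>k. sum_mat (B ^\<^sub>m k)" and ?s = "\<lambda>k. sum_mat (A ^\<^sub>m k)"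
  have "fps_nth sum_mat_pow_mult_pow_fps p = (\<Sum>i\<le>p. ?u p + x * (\<Sum>l<p - i. ?u (p - Suc l) * ?s l))"
    unfolding sum_mat_pow_mult_pow_fps_def fps_nth_Abs_fps
  proof (intro sum.cong refl)
    fix i assume "i \<in> {..p}"
    then show "sum_mat (B ^\<^sub>m i * A ^\<^sub>m (p - i)) = ?u p + x * (\<Sum>l<p - i. ?u (p - Suc l) * ?s l)"
      using sum_mat_pow_mult_pow[of i "p - i"] by simp
  qed
  also have "\<dots> = of_nat (Suc p) * ?u p + x * (\<Sum>l<p. of_nat (p - l) * (?u (p - Suc l) * ?s l))"
    by (simp add: sum.distrib sum_distrib_left[symmetric] sum_atMost_sum_lessThan_diff)
  finally have lhs: "fps_nth sum_mat_pow_mult_pow_fps p =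
      of_nat (Suc p) * ?u p + x * (\<Sum>l<p. of_nat (p - l) * (?u (p - Suc l) * ?s l))" .
  have deriv: "fps_nth (fps_deriv (fps_X * sum_mat_pow_fps B)) k = of_nat (Suc k) * ?u k" for k
    by (simp add: sum_mat_pow_fps_def algebra_simps)
  have rhs: "fps_nth (fps_const x * fps_X * sum_mat_pow_fps A * fps_deriv (fps_X * sum_mat_pow_fps B)) p =
      x * (\<Sum>l<p. of_nat (p - l) * (?u (p - Suc l) * ?s l))"
  proof (cases p)
    case 0
    then show ?thesis
      by simp
  next
    case (Suc q)
    have "fps_nth (fps_const x * fps_X * sum_mat_pow_fps A * fps_deriv (fps_X * sum_mat_pow_fps B)) (Suc q) =
        x * fps_nth (sum_mat_pow_fps A * fps_deriv (fps_X * sum_mat_pow_fps B)) q"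
      unfolding mult.assoc[of "fps_const x * fps_X"] by (rule fps_nth_const_X_mult_Suc)
    also have "\<dots> = x * (\<Sum>l\<le>q. ?s l * (of_nat (Suc (q - l)) * ?u (q - l)))"
      unfolding fps_mult_nth deriv by (simp add: sum_mat_pow_fps_def atLeast0AtMost)
    also have "\<dots> = x * (\<Sum>l<Suc q. of_nat (Suc q - l) * (?u (Suc q - Suc l) * ?s l))"
      unfolding lessThan_Suc_atMost
      by (auto simp: Suc_diff_le intro!: sum.cong arg_cong[where f = "(*) x"])
    finally show ?thesis
      using Suc by simp
  qed
  show "fps_nth sum_mat_pow_mult_pow_fps p = fps_nth (fps_deriv (fps_X * sum_mat_pow_fps B) +
      fps_const x * fps_X * sum_mat_pow_fps A * fps_deriv (fps_X * sum_mat_pow_fps B)) p"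
    using lhs rhs deriv[of p] by simp
qed

lemma M_fps_rank_one_update:
  assumes "0 < n"
  shows "M_fps A =
     (fps_const (of_nat n * x) * fps_X * fps_deriv (fps_X * Mt_fps B))
       / (1 - fps_const (of_nat n * x) * fps_X * Mt_fps B)
     + M_fps B"
proof -
  define c where "c = fps_const x * fps_X"
  define U where "U = sum_mat_pow_fps B"
  define V where "V = fps_deriv (fps_X * U)"
  have scale: "fps_const (of_nat n * x) * fps_const (1 / of_nat n) = fps_const x"
    unfolding fps_const_mult[symmetric] using assms by simp
  have denominator: "fps_const (of_nat n * x) * fps_X * Mt_fps B = c * U"
    unfolding Mt_fps_eq_sum_mat_pow_fps[OF B_carrier] c_def U_def scale[symmetric]
    by (simp only: ac_simps)
  have "fps_deriv (fps_X * Mt_fps B) = fps_const (1 / of_nat n) * V"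
    unfolding Mt_fps_eq_sum_mat_pow_fps[OF B_carrier] V_def U_def
    by (simp only: mult.left_commute[of fps_X] fps_deriv_mult_const_left)
  then have numerator: "fps_const (of_nat n * x) * fps_X * fps_deriv (fps_X * Mt_fps B) = c * V"
    unfolding c_def scale[symmetric] by (simp only: ac_simps)
  have "inverse (1 - c * U) = 1 + c * sum_mat_pow_fps A"
    unfolding c_def U_def by (rule inverse_one_minus_fps) (rule sum_mat_pow_fps_perturbed)
  moreover have "M_fps A = M_fps B + c * (V + c * sum_mat_pow_fps A * V)"
    unfolding c_def V_def U_def using M_fps_perturbed sum_mat_pow_mult_pow_fps_eq by simp
  ultimately have "M_fps A = c * V * inverse (1 - c * U) + M_fps B"
    by (simp add: algebra_simps)
  also have "\<dots> = c * V / (1 - c * U) + M_fps B"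
    by (simp add: fps_divide_unit c_def)
  finally show ?thesis
    unfolding numerator denominator .
qed

end

theorem lemma4p3:
  fixes n :: nat and x :: complex
  assumes "n \<ge> 2"
  shows "M_fps (x \<cdot>\<^sub>m J_mat n + B_mat n) =
     (fps_const (of_nat n * x) * fps_X * fps_deriv (fps_X * Mt_fps (B_mat n)))
       / (1 - fps_const (of_nat n * x) * fps_X * Mt_fps (B_mat n))
     + M_fps (B_mat n)"
proof -
  interpret rank_one_update n "B_mat n" x
    by unfold_locales (simp add: B_mat_def)
  show ?thesis
    using M_fps_rank_one_update assms by simp
qed

end
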